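(* Let $G=Z_{2^{\lambda_1}}\times\cdots\times Z_{2^{\lambda_n}}$ with $\lambda_1\le\cdots\le\lambda_n$. Then $G$ has an irregular characteristic subgroup if and only if there exist indices $i<j$ with $\lambda_j-\lambda_i\ge 2$ such that neither of the factors $Z_{2^{\lambda_i}}$ nor $Z_{2^{\lambda_j}}$ occurs repeated in this decomposition of $G$ (i.e. $\lambda_i$ and $\lambda_j$ each occur exactly once among $\lambda_1,\dots,\lambda_n$).
   Context: Tuples are ordered componentwise; for $\mathbf a$ with $\mathbf 0\le\mathbf a\le(\lambda_1,\dots,\lambda_n)$, $T(\mathbf a)$ is the set of $(g_1,\dots,g_n)\in G$ with $|g_i|=2^{a_i}$ for all $i$, and $R(\mathbf a)=\bigcup_{\mathbf b\le\mathbf a}T(\mathbf b)$. A subgroup is regular if it equals $R(\mathbf a)$ for some such $\mathbf a$, and irregular otherwise. *)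

theory Defs
  imports "HOL-Algebra.Algebra"
begin

definition Gp :: "nat \<Rightarrow> (nat \<Rightarrow> nat) \<Rightarrow> (nat \<Rightarrow> int) monoid" where
  "Gp n l = product_group {..<n} (\<lambda>i. integer_mod_group (2 ^ l i))"

definition characteristic :: "'a set \<Rightarrow> ('a, 'b) monoid_scheme \<Rightarrow> bool" where
  "characteristic H G \<longleftrightarrow> subgroup H G \<and> (\<forall>\<phi>. \<phi> \<in> iso G G \<longrightarrow> \<phi> ` H = H)"

definition Tset :: "nat \<Rightarrow> (nat \<Rightarrow> nat) \<Rightarrow> (nat \<Rightarrow> nat) \<Rightarrow> (nat \<Rightarrow> int) set" where
  "Tset n l a = {g \<in> carrier (Gp n l).
     \<forall>i<n. group.ord (integer_mod_group (2 ^ l i)) (g i) = 2 ^ a i}"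

definition Rset :: "nat \<Rightarrow> (nat \<Rightarrow> nat) \<Rightarrow> (nat \<Rightarrow> nat) \<Rightarrow> (nat \<Rightarrow> int) set" where
  "Rset n l a = (\<Union>b \<in> {b. \<forall>i<n. b i \<le> a i}. Tset n l b)"

definition regular :: "nat \<Rightarrow> (nat \<Rightarrow> nat) \<Rightarrow> (nat \<Rightarrow> int) set \<Rightarrow> bool" where
  "regular n l H \<longleftrightarrow> (\<exists>a. (\<forall>i<n. a i \<le> l i) \<and> H = Rset n l a)"

end

theory Submission
  imports Defs
begin

text \<open>
  A subgroup \<open>H\<close> of \<open>G\<close> is regular iff it contains the single-coordinate components of its
  elements: then \<open>H\<close> is the product of its intersections with the cyclic factors, and these are
  of the form \<open>2^s \<int>/2^\<lambda>\<^sub>k\<close>.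

  If \<open>H\<close> is characteristic, the transvections \<open>g\<^sub>k \<mapsto> g\<^sub>k + c g\<^sub>m\<close> (automorphisms as
  soon as \<open>2^\<lambda>\<^sub>k\<close> divides \<open>c 2^\<lambda>\<^sub>m\<close>) show that a component of some \<open>h \<in> H\<close> that lies
  outside \<open>H\<close> sits at an exponent occurring only once, and that two such components have
  exponents at least \<open>2\<close> apart. As \<open>h\<close> is the product of its components, such components
  never come alone, so an irregular characteristic subgroup forces the condition.

  Conversely, for unrepeated exponents with \<open>\<lambda>\<^sub>i + 2 \<le> \<lambda>\<^sub>j\<close>, the elements \<open>g\<close> with
  \<open>4g = 0\<close>, \<open>g \<in> 2^(\<lambda>\<^sub>i-1) G\<close>, \<open>2g \<in> 2^(\<lambda>\<^sub>j-1) G\<close> and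
  \<open>g \<in> 2^\<lambda>\<^sub>i G \<longleftrightarrow> 2g \<in> 2^\<lambda>\<^sub>j G\<close> form a set defined from the group structure alone, hence
  invariant under automorphisms. In coordinates it is cut out by congruences, one of which
  couples the coordinates \<open>i\<close> and \<open>j\<close>; so it is a subgroup that is not regular.
\<close>

lemma mult_mod_mod_eq: "(K::int) dvd c * M \<Longrightarrow> (c * (z mod M)) mod K = (c * z) mod K"
proof -
  assume "K dvd c * M"
  then have "K dvd c * M * (z div M)" by simp
  moreover have "c * (z mod M) = c * z - c * M * (z div M)"
    by (simp add: minus_mult_div_eq_mod[symmetric] algebra_simps)
  ultimately show ?thesis by (simp add: mod_eq_dvd_iff)
qed

lemma dvd_linear_mod_iff:
  fixes M c d K K' :: int
  assumes "M dvd c * K" "M dvd d * K'"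
  shows "M dvd c * (x mod K) + d * (y mod K') \<longleftrightarrow> M dvd c * x + d * y"
proof -
  have "c * (x mod K) + d * (y mod K') = (c * x + d * y) + (- (x div K) * (c * K) - (y div K') * (d * K'))"
    by (simp add: minus_mult_div_eq_mod[symmetric] algebra_simps)
  moreover have "M dvd - (x div K) * (c * K) - (y div K') * (d * K')" using assms by simp
  ultimately show ?thesis using dvd_add_left_iff by metis
qed

lemma pow2_dvd_pow2_mult_iff: "c \<le> a \<Longrightarrow> (2::int) ^ a dvd 2 ^ c * x \<longleftrightarrow> 2 ^ (a - c) dvd x"
  by (metis le_add_diff_inverse mult_dvd_mono dvd_mult_cancel_left power_add power_not_zero
      zero_neq_numeral dvd_refl)

lemma pow2_dvd_times4_iff: "2 \<le> c \<Longrightarrow> (2::int) ^ c dvd 4 * x \<longleftrightarrow> 2 ^ (c - 2) dvd x"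
  using pow2_dvd_pow2_mult_iff[of 2 c x] by simp

lemma pow2_dvd_times2_iff: "1 \<le> c \<Longrightarrow> (2::int) ^ c dvd 2 * x \<longleftrightarrow> 2 ^ (c - 1) dvd x"
  using pow2_dvd_pow2_mult_iff[of 1 c x] by simp

text \<open>Under the coordinatewise conditions of the coupling set below, a coordinate of exponent
  \<open>c\<close> can only fail \<open>2^a\<close>-divisibility if \<open>c = a\<close>, and its double can only fail
  \<open>2^b\<close>-divisibility if \<open>c = b\<close>.\<close>

lemma pow2_min_dvd_from_coupling_conditions:
  fixes x :: int
  assumes four: "2 ^ c dvd 4 * x" and low: "2 ^ min (a - 1) c dvd x"
    and two: "2 ^ min (b - 1) c dvd 2 * x" and "c \<noteq> a" "a + 2 \<le> b"
  shows "2 ^ min a c dvd x"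
proof -
  consider "c < a" | "a < c" "c < b" | "b \<le> c" using \<open>c \<noteq> a\<close> by linarith
  then show ?thesis
  proof cases
    case 1
    then have "min (a - 1) c = c" "min a c = c" by simp_all
    then show ?thesis using low by simp
  next
    case 2
    then have "min (b - 1) c = c" by simp
    then have "2 ^ (c - 1) dvd x" using two pow2_dvd_times2_iff[of c x] 2 by simp
    then show ?thesis using 2 by (simp add: min_def power_le_dvd)
  next
    case 3
    then have "2 ^ (c - 2) dvd x" using four pow2_dvd_times4_iff[of c x] assms(5) by simp
    then show ?thesis using 3 assms(5) by (simp add: min_def power_le_dvd)
  qed
qed

lemma pow2_min_dvd_double_from_coupling_conditions:
  fixes x :: int
  assumes four: "2 ^ c dvd 4 * x" and two: "2 ^ min (b - 1) c dvd 2 * x" and "c \<noteq> b" "2 \<le> b"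
  shows "2 ^ min b c dvd 2 * x"
proof (cases "c < b")
  case True
  then have "min (b - 1) c = c" "min b c = c" by simp_all
  then show ?thesis using two by simp
next
  case False
  then obtain d where c: "c = d + 2" using assms(4) by (metis add.commute le_Suc_ex le_trans not_le)
  then have "2 ^ d dvd x" using four by (simp add: power_add mult.commute)
  then have "2 ^ (d + 1) dvd 2 * x" by (simp add: mult_dvd_mono)
  moreover have "min b c \<le> d + 1" using False assms(3) c by simp
  ultimately show ?thesis by (rule power_le_dvd)
qed

lemma pow2_coupling_iff:
  fixes x y :: int
  assumes "p < q" "2 ^ p dvd x" "2 ^ q dvd y"
  shows "(2 ^ (p + 1) dvd x \<longleftrightarrow> 2 ^ (q + 1) dvd y) \<longleftrightarrow> 2 ^ (q + 1) dvd 2 ^ (q - p) * x + y"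
proof -
  obtain a b where x: "x = 2 ^ p * a" and y: "y = 2 ^ q * b" using assms(2,3) by (auto elim!: dvdE)
  have "(2::int) ^ (q - p) * 2 ^ p = 2 ^ q" using assms(1) by (simp flip: power_add)
  then have "2 ^ (q - p) * x + y = 2 ^ q * (a + b)" unfolding x y by (metis distrib_left mult.assoc)
  then show ?thesis unfolding x y by simp
qed

text \<open>An ideal of \<open>\<int>/2^L\<close> is generated by a power of \<open>2\<close>: if \<open>y \<in> P\<close> then Bezout
  gives \<open>gcd y (2^L) = 2^t\<close> as a multiple of \<open>y\<close> modulo \<open>2^L\<close>.\<close>

lemma mod_pow2_ideal_eq_multiples:
  fixes P :: "int set"
  assumes zero: "0 \<in> P" and scale: "\<And>x c. x \<in> P \<Longrightarrow> (c * x) mod 2 ^ L \<in> P"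
  shows "\<exists>s\<le>L. \<forall>y\<in>{0..<2 ^ L}. y \<in> P \<longleftrightarrow> 2 ^ s dvd y"
proof -
  define Q where "Q t \<longleftrightarrow> (2::int) ^ t mod 2 ^ L \<in> P" for t
  define s where "s = (LEAST t. Q t)"
  have ex: "Q L" using zero by (simp add: Q_def)
  have s_mem: "(2::int) ^ s mod 2 ^ L \<in> P" using LeastI[of Q, OF ex] by (simp add: s_def Q_def)
  have "y \<in> P \<longleftrightarrow> 2 ^ s dvd y" if y: "y \<in> {0..<2 ^ L}" for y
  proof
    assume "y \<in> P"
    obtain t where "t \<le> L" and t: "normalize (gcd y (2 ^ L)) = (2::int) ^ t"
      using divides_primepow[of 2 "gcd y (2 ^ L)" L] by auto
    then have gcd: "gcd y (2 ^ L) = (2::int) ^ t" by simp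
    obtain u v where "u * y + v * 2 ^ L = gcd y ((2::int) ^ L)" using bezout_int by blast
    then have "u * y = 2 ^ t + (- v) * 2 ^ L" unfolding gcd by simp
    then have "(u * y) mod 2 ^ L = 2 ^ t mod 2 ^ L" by (simp only: mod_mult_self1)
    then have "(2::int) ^ t mod 2 ^ L \<in> P" using scale[OF \<open>y \<in> P\<close>] by metis
    then have "s \<le> t" unfolding s_def by (intro Least_le) (simp add: Q_def)
    then have "(2::int) ^ s dvd gcd y (2 ^ L)" unfolding gcd by (rule le_imp_power_dvd)
    then show "2 ^ s dvd y" by (meson dvd_trans gcd_dvd1)
  next
    assume "2 ^ s dvd y"
    then obtain w where w: "y = 2 ^ s * w" by blast
    have "(w * (2 ^ s mod 2 ^ L)) mod 2 ^ L = y"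
      using y by (simp add: w mod_mult_right_eq mult.commute)
    then show "y \<in> P" using scale[OF s_mem] by metis
  qed
  moreover have "s \<le> L" unfolding s_def using ex by (rule Least_le)
  ultimately show ?thesis by blast
qed

lemma iso_if_inverse:
  assumes "f \<in> hom G H" "\<And>y. y \<in> carrier H \<Longrightarrow> f' y \<in> carrier G"
    "\<And>x. x \<in> carrier G \<Longrightarrow> f' (f x) = x" "\<And>y. y \<in> carrier H \<Longrightarrow> f (f' y) = y"
  shows "f \<in> iso G H"
  using assms unfolding iso_def
  by (auto intro!: bij_betw_byWitness[where f' = f'] dest: hom_carrier)

lemma iso_eq_one_iff:
  assumes "group G" "group H" "\<phi> \<in> iso G H" "g \<in> carrier G"
  shows "\<phi> g = \<one>\<^bsub>H\<^esub> \<longleftrightarrow> g = \<one>\<^bsub>G\<^esub>"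
  using assms hom_one[OF iso_imp_homomorphism[OF assms(3)] assms(1,2)]
  by (metis group.is_monoid iso_iff inj_onD monoid.one_closed)

definition pow_image :: "('a, 'b) monoid_scheme \<Rightarrow> nat \<Rightarrow> 'a set" where
  "pow_image G m = (\<lambda>x. x [^]\<^bsub>G\<^esub> m) ` carrier G"

lemma iso_pow_image_iff:
  assumes "group G" "group H" "\<phi> \<in> iso G H" "g \<in> carrier G"
  shows "\<phi> g \<in> pow_image H m \<longleftrightarrow> g \<in> pow_image G m"
proof
  have hom: "\<phi> \<in> hom G H" and onto: "\<phi> ` carrier G = carrier H" and inj: "inj_on \<phi> (carrier G)"
    using assms(3) by (auto simp: iso_iff)
  assume "\<phi> g \<in> pow_image H m"
  then obtain y where "y \<in> carrier H" and y: "\<phi> g = y [^]\<^bsub>H\<^esub> m"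
    by (auto simp: pow_image_def)
  then obtain x where x: "x \<in> carrier G" and "y = \<phi> x" using onto by blast
  with y have "\<phi> g = \<phi> x [^]\<^bsub>H\<^esub> m" by simp
  then have "\<phi> g = \<phi> (x [^]\<^bsub>G\<^esub> m)" using hom_nat_pow[OF hom x assms(1,2)] by simp
  then have "g = x [^]\<^bsub>G\<^esub> m"
    using inj_onD[OF inj] assms(4) x by (simp add: group.is_monoid[OF assms(1)] monoid.nat_pow_closed)
  then show "g \<in> pow_image G m" using x by (simp add: pow_image_def)
next
  assume "g \<in> pow_image G m"
  then obtain x where x: "x \<in> carrier G" and "g = x [^]\<^bsub>G\<^esub> m" by (auto simp: pow_image_def)
  then have "\<phi> g = \<phi> x [^]\<^bsub>H\<^esub> m" using hom_nat_pow[OF iso_imp_homomorphism[OF assms(3)] x assms(1,2)] by simp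
  then show "\<phi> g \<in> pow_image H m"
    using x assms(3) by (auto simp: pow_image_def iso_iff dest: hom_carrier)
qed

lemma characteristic_subgroup: "characteristic H G \<Longrightarrow> subgroup H G"
  unfolding characteristic_def by blast

lemma characteristic_image_mem:
  "characteristic H G \<Longrightarrow> \<phi> \<in> iso G G \<Longrightarrow> h \<in> H \<Longrightarrow> \<phi> h \<in> H"
  unfolding characteristic_def by blast

lemma characteristic_iso_diff_mem:
  assumes H: "characteristic H G" and "\<phi> \<in> iso G G" "h \<in> H"
  shows "\<phi> h \<otimes>\<^bsub>G\<^esub> inv\<^bsub>G\<^esub> h \<in> H"
  using characteristic_subgroup[OF H] characteristic_image_mem[OF assms] assms(3)
  by (simp add: subgroup.m_closed subgroup.m_inv_closed)

lemma characteristicI: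
  assumes "subgroup H G" and "\<And>\<phi> g. \<phi> \<in> iso G G \<Longrightarrow> g \<in> carrier G \<Longrightarrow> \<phi> g \<in> H \<longleftrightarrow> g \<in> H"
  shows "characteristic H G"
  unfolding characteristic_def
proof (intro conjI allI impI)
  fix \<phi> assume \<phi>: "\<phi> \<in> iso G G"
  have onto: "\<phi> ` carrier G = carrier G" using \<phi> by (simp add: iso_iff)
  note sub = subgroup.mem_carrier[OF assms(1)]
  show "\<phi> ` H = H"
  proof
    show "\<phi> ` H \<subseteq> H" using assms(2)[OF \<phi>] sub by blast
    show "H \<subseteq> \<phi> ` H"
    proof
      fix h assume h: "h \<in> H"
      then obtain g where "g \<in> carrier G" "h = \<phi> g" using onto sub by blast
      then show "h \<in> \<phi> ` H" using assms(2)[OF \<phi>] h by blast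
    qed
  qed
qed fact

text \<open>Defined from the group operations alone; for \<open>G = Gp n l\<close>, \<open>a = l i\<close> and \<open>b = l j\<close>
  it is the explicit \<open>coupling_set n l i j\<close> below.\<close>

definition coupling_set_of :: "('a, 'b) monoid_scheme \<Rightarrow> nat \<Rightarrow> nat \<Rightarrow> 'a set" where
  "coupling_set_of G a b = {g \<in> carrier G. g [^]\<^bsub>G\<^esub> (4::nat) = \<one>\<^bsub>G\<^esub>
      \<and> g \<in> pow_image G (2 ^ (a - 1)) \<and> g [^]\<^bsub>G\<^esub> (2::nat) \<in> pow_image G (2 ^ (b - 1))
      \<and> (g \<in> pow_image G (2 ^ a) \<longleftrightarrow> g [^]\<^bsub>G\<^esub> (2::nat) \<in> pow_image G (2 ^ b))}"

lemma iso_coupling_set_of_iff: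
  assumes G: "group G" and \<phi>: "\<phi> \<in> iso G G" and g: "g \<in> carrier G"
  shows "\<phi> g \<in> coupling_set_of G a b \<longleftrightarrow> g \<in> coupling_set_of G a b"
proof -
  have hom: "\<phi> \<in> hom G G" using \<phi> by (rule iso_imp_homomorphism)
  have pow: "\<phi> g [^]\<^bsub>G\<^esub> m = \<phi> (g [^]\<^bsub>G\<^esub> m)" for m :: nat
    using hom_nat_pow[OF hom g G G] by simp
  have "g [^]\<^bsub>G\<^esub> m \<in> carrier G" for m :: nat
    using g by (simp add: group.is_monoid[OF G] monoid.nat_pow_closed)
  then show ?thesis
    using g hom_carrier[OF hom] iso_pow_image_iff[OF G G \<phi>] iso_eq_one_iff[OF G G \<phi>]
    unfolding coupling_set_of_def by (auto simp: pow)
qed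

lemma characteristic_coupling_set_of:
  "group G \<Longrightarrow> subgroup (coupling_set_of G a b) G \<Longrightarrow> characteristic (coupling_set_of G a b) G"
  by (rule characteristicI) (simp_all add: iso_coupling_set_of_iff)

lemma group_Gp: "group (Gp n l)"
  unfolding Gp_def by (rule product_group) simp

lemma carrier_Gp: "carrier (Gp n l) = (\<Pi>\<^sub>E k\<in>{..<n}. {0..<2 ^ l k})"
  unfolding Gp_def by (simp add: carrier_integer_mod_group)

lemma mult_Gp: "g \<otimes>\<^bsub>Gp n l\<^esub> h = (\<lambda>k\<in>{..<n}. (g k + h k) mod 2 ^ l k)"
  unfolding Gp_def by simp

lemma one_Gp: "\<one>\<^bsub>Gp n l\<^esub> = (\<lambda>k\<in>{..<n}. 0)"
  unfolding Gp_def by simp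

lemma inv_Gp: "g \<in> carrier (Gp n l) \<Longrightarrow> inv\<^bsub>Gp n l\<^esub> g = (\<lambda>k\<in>{..<n}. (- g k) mod 2 ^ l k)"
  unfolding Gp_def
  by (subst inv_product_group) (auto intro!: restrict_ext simp: carrier_integer_mod_group PiE_iff)

lemma nat_pow_Gp:
  "g \<in> carrier (Gp n l) \<Longrightarrow> g [^]\<^bsub>Gp n l\<^esub> (c::nat) = (\<lambda>k\<in>{..<n}. (int c * g k) mod 2 ^ l k)"
proof (induction c)
  case (Suc c)
  then show ?case
    by (auto simp: mult_Gp mod_add_left_eq mod_add_right_eq algebra_simps intro!: restrict_ext)
qed (simp add: one_Gp)

lemma nat_pow_Gp_closed: "g \<in> carrier (Gp n l) \<Longrightarrow> g [^]\<^bsub>Gp n l\<^esub> (m::nat) \<in> carrier (Gp n l)"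
  by (simp add: group.is_monoid[OF group_Gp] monoid.nat_pow_closed)

lemma carrier_GpD: "g \<in> carrier (Gp n l) \<Longrightarrow> k < n \<Longrightarrow> 0 \<le> g k \<and> g k < 2 ^ l k"
  by (auto simp: carrier_Gp PiE_iff)

lemma carrier_Gp_undefined: "g \<in> carrier (Gp n l) \<Longrightarrow> n \<le> k \<Longrightarrow> g k = undefined"
  by (auto simp: carrier_Gp PiE_iff extensional_def)

lemma carrier_GpI:
  "(\<And>k. k < n \<Longrightarrow> 0 \<le> f k \<and> f k < 2 ^ l k) \<Longrightarrow> (\<lambda>k\<in>{..<n}. f k) \<in> carrier (Gp n l)"
  by (auto simp: carrier_Gp PiE_iff)

lemma Gp_eqI:
  "g \<in> carrier (Gp n l) \<Longrightarrow> h \<in> carrier (Gp n l) \<Longrightarrow> (\<And>k. k < n \<Longrightarrow> g k = h k) \<Longrightarrow> g = h"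
  using carrier_Gp_undefined by (metis ext not_le)

lemma carrier_Gp_coord:
  "g \<in> carrier (Gp n l) \<Longrightarrow> k < n \<Longrightarrow> g k \<in> carrier (integer_mod_group (2 ^ l k))"
  by (simp add: carrier_integer_mod_group carrier_GpD)

lemma nat_pow_eq_one_Gp_iff:
  assumes "g \<in> carrier (Gp n l)"
  shows "g [^]\<^bsub>Gp n l\<^esub> (m::nat) = \<one>\<^bsub>Gp n l\<^esub> \<longleftrightarrow> (\<forall>k<n. (2::int) ^ l k dvd int m * g k)"
  using assms by (simp add: nat_pow_Gp one_Gp fun_eq_iff dvd_eq_mod_eq_0)

lemma mem_pow_image_Gp:
  "y \<in> pow_image (Gp n l) (2 ^ s) \<longleftrightarrow> y \<in> carrier (Gp n l) \<and> (\<forall>k<n. (2::int) ^ min s (l k) dvd y k)"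
proof
  assume "y \<in> pow_image (Gp n l) (2 ^ s)"
  then obtain x where x: "x \<in> carrier (Gp n l)" and y: "y = x [^]\<^bsub>Gp n l\<^esub> ((2::nat) ^ s)"
    by (auto simp: pow_image_def)
  have "(2::int) ^ min s (l k) dvd (2 ^ s * x k) mod 2 ^ l k" for k
    by (intro dvd_mod dvd_mult2 le_imp_power_dvd) simp_all
  moreover have "y \<in> carrier (Gp n l)" using x y nat_pow_Gp_closed by simp
  ultimately show "y \<in> carrier (Gp n l) \<and> (\<forall>k<n. (2::int) ^ min s (l k) dvd y k)"
    using x y by (simp add: nat_pow_Gp)
next
  assume "y \<in> carrier (Gp n l) \<and> (\<forall>k<n. (2::int) ^ min s (l k) dvd y k)"
  then have y: "y \<in> carrier (Gp n l)" and dvd: "\<And>k. k < n \<Longrightarrow> (2::int) ^ min s (l k) dvd y k"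
    by auto
  define x where "x = (\<lambda>k\<in>{..<n}. if s \<le> l k then y k div 2 ^ s else 0)"
  have x: "x \<in> carrier (Gp n l)"
    unfolding x_def
  proof (rule carrier_GpI)
    fix k assume "k < n"
    then have "0 \<le> y k" "y k < 2 ^ l k" using carrier_GpD[OF y] by auto
    moreover have "y k div 2 ^ s \<le> y k"
      using \<open>0 \<le> y k\<close> int_div_le_self[of "y k"] by (cases "y k = 0") auto
    ultimately show "0 \<le> (if s \<le> l k then y k div 2 ^ s else 0) \<and> (if s \<le> l k then y k div 2 ^ s else 0) < 2 ^ l k"
      by (auto simp: pos_imp_zdiv_nonneg_iff)
  qed
  have "x [^]\<^bsub>Gp n l\<^esub> ((2::nat) ^ s) = y"
  proof (rule Gp_eqI)
    fix k assume k: "k < n"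
    show "(x [^]\<^bsub>Gp n l\<^esub> ((2::nat) ^ s)) k = y k"
    proof (cases "s \<le> l k")
      case True
      then show ?thesis unfolding nat_pow_Gp[OF x] using dvd[OF k] carrier_GpD[OF y k] k by (simp add: x_def)
    next
      case False
      then have "(2::int) ^ l k dvd y k" using dvd[OF k] by (simp add: min_def)
      then have "y k = 0" using zdvd_imp_le carrier_GpD[OF y k] by (meson le_less not_le)
      then show ?thesis unfolding nat_pow_Gp[OF x] using False k by (simp add: x_def)
    qed
  qed (use x y nat_pow_Gp_closed in simp_all)
  then show "y \<in> pow_image (Gp n l) (2 ^ s)" using x by (auto simp: pow_image_def)
qed

lemma nat_pow_mem_pow_image_Gp_iff:
  assumes "g \<in> carrier (Gp n l)"
  shows "g [^]\<^bsub>Gp n l\<^esub> (m::nat) \<in> pow_image (Gp n l) (2 ^ s)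
    \<longleftrightarrow> (\<forall>k<n. (2::int) ^ min s (l k) dvd int m * g k)"
proof -
  have "(2::int) ^ min s (l k) dvd 2 ^ l k" for k by (rule le_imp_power_dvd) simp
  then show ?thesis
    using nat_pow_Gp_closed[OF assms] unfolding mem_pow_image_Gp by (simp add: nat_pow_Gp[OF assms] dvd_mod_iff)
qed

definition single_coord :: "nat \<Rightarrow> nat \<Rightarrow> int \<Rightarrow> (nat \<Rightarrow> int)" where
  "single_coord n k x = (\<lambda>i\<in>{..<n}. if i = k then x else 0)"

lemma single_coord_carrier: "0 \<le> x \<Longrightarrow> x < 2 ^ l k \<Longrightarrow> single_coord n k x \<in> carrier (Gp n l)"
  unfolding single_coord_def by (rule carrier_GpI) auto

lemma single_coord_zero: "single_coord n k 0 = \<one>\<^bsub>Gp n l\<^esub>"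
  unfolding single_coord_def one_Gp by auto

lemma single_coord_nat_pow:
  assumes "k < n" "0 \<le> x" "x < 2 ^ l k"
  shows "single_coord n k x [^]\<^bsub>Gp n l\<^esub> (m::nat) = single_coord n k ((int m * x) mod 2 ^ l k)"
  using assms single_coord_carrier[of x l k n]
  by (subst nat_pow_Gp) (auto simp: single_coord_def intro!: restrict_ext)

lemma subgroup_mem_if_single_coords:
  assumes H: "subgroup H (Gp n l)" and g: "g \<in> carrier (Gp n l)"
    and single: "\<And>k. k < n \<Longrightarrow> single_coord n k (g k) \<in> H"
  shows "g \<in> H"
proof -
  define prefix where "prefix j = (\<lambda>k\<in>{..<n}. if k < j then g k else 0)" for j
  have "prefix j \<in> H" for j
  proof (induction j)
    case 0
    have "prefix 0 = \<one>\<^bsub>Gp n l\<^esub>" by (simp add: prefix_def one_Gp)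
    then show ?case using subgroup.one_closed[OF H] by simp
  next
    case (Suc j)
    show ?case
    proof (cases "j < n")
      case True
      have "prefix (Suc j) = prefix j \<otimes>\<^bsub>Gp n l\<^esub> single_coord n j (g j)"
        using carrier_GpD[OF g] by (auto simp: prefix_def mult_Gp single_coord_def intro!: restrict_ext)
      then show ?thesis using subgroup.m_closed[OF H Suc.IH single[OF True]] by simp
    next
      case False
      then have "prefix (Suc j) = prefix j" by (auto simp: prefix_def intro!: restrict_ext)
      then show ?thesis using Suc.IH by simp
    qed
  qed
  moreover have "prefix n = g"
    using carrier_Gp_undefined[OF g] by (auto simp: prefix_def fun_eq_iff)
  ultimately show ?thesis by metis
qed

lemma single_coord_mem_if_others:
  assumes H: "subgroup H (Gp n l)" and h: "h \<in> H" and k: "k < n"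
    and others: "\<And>m. m < n \<Longrightarrow> m \<noteq> k \<Longrightarrow> single_coord n m (h m) \<in> H"
  shows "single_coord n k (h k) \<in> H"
proof -
  have hc: "h \<in> carrier (Gp n l)" using subgroup.mem_carrier[OF H h] .
  define g where "g = (\<lambda>i\<in>{..<n}. if i = k then 0 else h i)"
  have gc: "g \<in> carrier (Gp n l)" unfolding g_def by (rule carrier_GpI) (use carrier_GpD[OF hc] in auto)
  have "g \<in> H"
  proof (rule subgroup_mem_if_single_coords[OF H gc])
    fix m assume "m < n"
    then show "single_coord n m (g m) \<in> H"
      using others subgroup.one_closed[OF H] by (simp add: g_def single_coord_zero[of n _ l])
  qed
  then have "h \<otimes>\<^bsub>Gp n l\<^esub> inv\<^bsub>Gp n l\<^esub> g \<in> H"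
    using h H by (simp add: subgroup.m_closed subgroup.m_inv_closed)
  moreover have "h \<otimes>\<^bsub>Gp n l\<^esub> inv\<^bsub>Gp n l\<^esub> g = single_coord n k (h k)"
    unfolding inv_Gp[OF gc] using carrier_GpD[OF hc] k
    by (auto simp: mult_Gp g_def single_coord_def mod_add_right_eq intro!: restrict_ext)
  ultimately show ?thesis by simp
qed

section \<open>Transvections\<close>

definition transvection :: "nat \<Rightarrow> (nat \<Rightarrow> nat) \<Rightarrow> nat \<Rightarrow> nat \<Rightarrow> int \<Rightarrow> (nat \<Rightarrow> int) \<Rightarrow> (nat \<Rightarrow> int)" where
  "transvection n l m k c g = (\<lambda>i\<in>{..<n}. if i = k then (g k + c * g m) mod 2 ^ l k else g i)"

lemma transvection_carrier:
  "g \<in> carrier (Gp n l) \<Longrightarrow> transvection n l m k c g \<in> carrier (Gp n l)"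
  unfolding transvection_def by (rule carrier_GpI) (auto dest: carrier_GpD)

lemma transvection_inverse:
  assumes "g \<in> carrier (Gp n l)" "m \<noteq> k" "m < n"
  shows "transvection n l m k (- c) (transvection n l m k c g) = g"
proof (rule Gp_eqI)
  show "transvection n l m k (- c) (transvection n l m k c g) \<in> carrier (Gp n l)"
    by (intro transvection_carrier assms(1))
qed (use assms carrier_GpD[OF assms(1)] in
      \<open>auto simp: transvection_def mod_add_left_eq mod_diff_left_eq\<close>)

lemma transvection_iso:
  assumes "m \<noteq> k" "m < n" "k < n" and dvd: "(2::int) ^ l k dvd c * 2 ^ l m"
  shows "transvection n l m k c \<in> iso (Gp n l) (Gp n l)"
proof (rule iso_if_inverse)
  show "transvection n l m k c \<in> hom (Gp n l) (Gp n l)"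
  proof (rule homI)
    fix x y assume x: "x \<in> carrier (Gp n l)" and y: "y \<in> carrier (Gp n l)"
    have "((x k + y k) mod 2 ^ l k + c * ((x m + y m) mod 2 ^ l m)) mod 2 ^ l k
        = (x k + y k + (c * ((x m + y m) mod 2 ^ l m)) mod 2 ^ l k) mod 2 ^ l k"
      by (simp add: mod_add_left_eq mod_add_right_eq)
    also have "\<dots> = (x k + y k + c * (x m + y m)) mod 2 ^ l k"
      by (simp add: mult_mod_mod_eq[OF dvd] mod_add_right_eq)
    also have "\<dots> = ((x k + c * x m) mod 2 ^ l k + (y k + c * y m) mod 2 ^ l k) mod 2 ^ l k"
      by (simp add: mod_add_eq algebra_simps)
    finally have "((x k + y k) mod 2 ^ l k + c * ((x m + y m) mod 2 ^ l m)) mod 2 ^ l k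
        = ((x k + c * x m) mod 2 ^ l k + (y k + c * y m) mod 2 ^ l k) mod 2 ^ l k" .
    then show "transvection n l m k c (x \<otimes>\<^bsub>Gp n l\<^esub> y)
        = transvection n l m k c x \<otimes>\<^bsub>Gp n l\<^esub> transvection n l m k c y"
      using assms by (auto simp: transvection_def mult_Gp mod_add_eq intro!: restrict_ext)
  qed (rule transvection_carrier)
next
  fix x assume "x \<in> carrier (Gp n l)"
  then show "transvection n l m k (- c) x \<in> carrier (Gp n l)"
    and "transvection n l m k (- c) (transvection n l m k c x) = x"
    and "transvection n l m k c (transvection n l m k (- c) x) = x"
    using transvection_carrier transvection_inverse[OF _ assms(1,2), where c = "- c"]
      transvection_inverse[OF _ assms(1,2), where c = c] by simp_all
qed

lemma transvection_diff:
  assumes "h \<in> carrier (Gp n l)" "m \<noteq> k" "k < n"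
  shows "transvection n l m k c h \<otimes>\<^bsub>Gp n l\<^esub> inv\<^bsub>Gp n l\<^esub> h = single_coord n k ((c * h m) mod 2 ^ l k)"
  using assms
  by (auto simp: transvection_def mult_Gp inv_Gp single_coord_def mod_add_left_eq mod_add_right_eq
      mod_diff_left_eq intro!: restrict_ext)

section \<open>Regular subgroups are the coordinate-closed ones\<close>

lemma ord_integer_mod_group_dvd_pow2_iff:
  assumes x: "x \<in> carrier (integer_mod_group (2 ^ L))" and "b \<le> L"
  shows "group.ord (integer_mod_group (2 ^ L)) x dvd 2 ^ b \<longleftrightarrow> (2::int) ^ (L - b) dvd x"
proof -
  have "group.ord (integer_mod_group (2 ^ L)) x dvd 2 ^ b \<longleftrightarrow>
      x [^]\<^bsub>integer_mod_group (2 ^ L)\<^esub> ((2::nat) ^ b) = \<one>\<^bsub>integer_mod_group (2 ^ L)\<^esub>"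
    by (rule group.pow_eq_id[OF group_integer_mod_group x, symmetric])
  also have "\<dots> \<longleftrightarrow> (2::int) ^ b * 2 ^ (L - b) dvd 2 ^ b * x"
    using assms(2) by (simp add: dvd_eq_mod_eq_0 flip: power_add)
  also have "\<dots> \<longleftrightarrow> (2::int) ^ (L - b) dvd x" by simp
  finally show ?thesis .
qed

lemma ord_integer_mod_group_pow2:
  assumes "x \<in> carrier (integer_mod_group (2 ^ L))"
  obtains c where "group.ord (integer_mod_group (2 ^ L)) x = 2 ^ c"
  using ord_integer_mod_group_dvd_pow2_iff[OF assms order.refl] divides_primepow_nat[of 2] that
  by auto

lemma Rset_eq:
  assumes a: "\<And>k. k < n \<Longrightarrow> a k \<le> l k"
  shows "Rset n l a = {g \<in> carrier (Gp n l). \<forall>k<n. (2::int) ^ (l k - a k) dvd g k}"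
proof (intro equalityI subsetI)
  fix g assume "g \<in> Rset n l a"
  then obtain b where b: "\<And>k. k < n \<Longrightarrow> b k \<le> a k" and "g \<in> Tset n l b"
    by (auto simp: Rset_def)
  then have g: "g \<in> carrier (Gp n l)"
    and ord: "\<And>k. k < n \<Longrightarrow> group.ord (integer_mod_group (2 ^ l k)) (g k) = 2 ^ b k"
    by (auto simp: Tset_def)
  have "(2::int) ^ (l k - a k) dvd g k" if k: "k < n" for k
    using ord_integer_mod_group_dvd_pow2_iff[OF carrier_Gp_coord[OF g k] a[OF k]] ord[OF k] b[OF k]
    by (simp add: le_imp_power_dvd)
  then show "g \<in> {g \<in> carrier (Gp n l). \<forall>k<n. (2::int) ^ (l k - a k) dvd g k}" using g by simp
next
  fix g assume "g \<in> {g \<in> carrier (Gp n l). \<forall>k<n. (2::int) ^ (l k - a k) dvd g k}"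
  then have g: "g \<in> carrier (Gp n l)" and dvd: "\<And>k. k < n \<Longrightarrow> (2::int) ^ (l k - a k) dvd g k"
    by auto
  define b where "b k = (SOME c. group.ord (integer_mod_group (2 ^ l k)) (g k) = 2 ^ c)" for k
  have ord: "group.ord (integer_mod_group (2 ^ l k)) (g k) = 2 ^ b k" if k: "k < n" for k
    unfolding b_def by (rule someI_ex) (meson ord_integer_mod_group_pow2 carrier_Gp_coord[OF g k])
  have "b k \<le> a k" if k: "k < n" for k
    using ord_integer_mod_group_dvd_pow2_iff[OF carrier_Gp_coord[OF g k] a[OF k]] dvd[OF k] ord[OF k]
    by (simp add: dvd_power_iff_le)
  moreover have "g \<in> Tset n l b" using g ord by (simp add: Tset_def)
  ultimately show "g \<in> Rset n l a" unfolding Rset_def by blast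
qed

lemma subgroup_single_coord_exponents:
  assumes H: "subgroup H (Gp n l)"
  obtains s where "\<And>k. k < n \<Longrightarrow> s k \<le> l k"
    and "\<And>k y. k < n \<Longrightarrow> 0 \<le> y \<Longrightarrow> y < 2 ^ l k \<Longrightarrow> single_coord n k y \<in> H \<longleftrightarrow> 2 ^ s k dvd y"
proof -
  have "\<exists>s\<le>l k. \<forall>y\<in>{0..<2 ^ l k}. y \<in> {y. single_coord n k y \<in> H} \<longleftrightarrow> 2 ^ s dvd y"
    if k: "k < n" for k
  proof (rule mod_pow2_ideal_eq_multiples)
    show "0 \<in> {y. single_coord n k y \<in> H}"
      using subgroup.one_closed[OF H] by (simp add: single_coord_zero[of n k l])
    fix x c assume "x \<in> {y. single_coord n k y \<in> H}"
    then have x: "single_coord n k x \<in> H" by simp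
    have "single_coord n k x k = x" using k by (simp add: single_coord_def)
    then have "0 \<le> x \<and> x < 2 ^ l k"
      using carrier_GpD[OF subgroup.mem_carrier[OF H x] k] by simp
    then have "single_coord n k x [^]\<^bsub>Gp n l\<^esub> nat (c mod 2 ^ l k)
        = single_coord n k ((int (nat (c mod 2 ^ l k)) * x) mod 2 ^ l k)"
      using single_coord_nat_pow k by blast
    moreover have "(int (nat (c mod 2 ^ l k)) * x) mod 2 ^ l k = (c * x) mod 2 ^ l k"
      by (simp add: mod_mult_left_eq)
    moreover have "single_coord n k x [^]\<^bsub>Gp n l\<^esub> nat (c mod 2 ^ l k) \<in> H"
      using group.subgroup_int_pow_closed[OF group_Gp H x, of "int (nat (c mod 2 ^ l k))"]
      unfolding int_pow_int .
    ultimately show "(c * x) mod 2 ^ l k \<in> {y. single_coord n k y \<in> H}" by simp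
  qed
  then have "\<forall>k. \<exists>s. k < n \<longrightarrow> s \<le> l k \<and> (\<forall>y\<in>{0..<2 ^ l k}. single_coord n k y \<in> H \<longleftrightarrow> 2 ^ s dvd y)"
    by simp
  then obtain s where "\<forall>k<n. s k \<le> l k \<and> (\<forall>y\<in>{0..<2 ^ l k}. single_coord n k y \<in> H \<longleftrightarrow> 2 ^ s k dvd y)"
    by (metis choice)
  then show thesis using that by auto
qed

definition coordinate_closed :: "nat \<Rightarrow> (nat \<Rightarrow> int) set \<Rightarrow> bool" where
  "coordinate_closed n H \<longleftrightarrow> (\<forall>h\<in>H. \<forall>k<n. single_coord n k (h k) \<in> H)"

lemma regular_imp_coordinate_closed:
  assumes "regular n l H"
  shows "coordinate_closed n H"
proof -
  obtain a where a: "\<And>k. k < n \<Longrightarrow> a k \<le> l k" and H: "H = Rset n l a"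
    using assms unfolding regular_def by blast
  have "single_coord n k (h k) \<in> H" if h: "h \<in> H" and k: "k < n" for h k
  proof -
    have "h \<in> carrier (Gp n l)" and dvd: "\<And>i. i < n \<Longrightarrow> (2::int) ^ (l i - a i) dvd h i"
      using h Rset_eq[OF a] H by auto
    then have "single_coord n k (h k) \<in> carrier (Gp n l)"
      using carrier_GpD k single_coord_carrier by blast
    then show ?thesis using H Rset_eq[OF a] dvd k by (simp add: single_coord_def)
  qed
  then show ?thesis unfolding coordinate_closed_def by blast
qed

lemma coordinate_closed_imp_regular:
  assumes H: "subgroup H (Gp n l)" and closed: "coordinate_closed n H"
  shows "regular n l H"
proof -
  obtain s where s_le: "\<And>k. k < n \<Longrightarrow> s k \<le> l k"
    and s: "\<And>k y. k < n \<Longrightarrow> 0 \<le> y \<Longrightarrow> y < 2 ^ l k \<Longrightarrow> single_coord n k y \<in> H \<longleftrightarrow> 2 ^ s k dvd y"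
    using subgroup_single_coord_exponents[OF H] by metis
  define a where "a k = l k - s k" for k
  have a: "a k \<le> l k" and s_eq: "k < n \<Longrightarrow> l k - a k = s k" for k
    using s_le by (auto simp: a_def)
  have "H = {g \<in> carrier (Gp n l). \<forall>k<n. (2::int) ^ (l k - a k) dvd g k}"
  proof (intro equalityI subsetI)
    fix h assume h: "h \<in> H"
    have hc: "h \<in> carrier (Gp n l)" using subgroup.mem_carrier[OF H h] .
    have "(2::int) ^ (l k - a k) dvd h k" if k: "k < n" for k
    proof -
      have "single_coord n k (h k) \<in> H" using closed h k unfolding coordinate_closed_def by blast
      then show ?thesis using s[OF k] carrier_GpD[OF hc k] s_eq[OF k] by simp
    qed
    then show "h \<in> {g \<in> carrier (Gp n l). \<forall>k<n. (2::int) ^ (l k - a k) dvd g k}"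
      using hc by blast
  next
    fix g assume "g \<in> {g \<in> carrier (Gp n l). \<forall>k<n. (2::int) ^ (l k - a k) dvd g k}"
    then have g: "g \<in> carrier (Gp n l)" and dvd: "\<And>k. k < n \<Longrightarrow> (2::int) ^ (l k - a k) dvd g k"
      by auto
    show "g \<in> H"
    proof (rule subgroup_mem_if_single_coords[OF H g])
      fix k assume k: "k < n"
      show "single_coord n k (g k) \<in> H"
        using s[OF k] carrier_GpD[OF g k] dvd[OF k] s_eq[OF k] by simp
    qed
  qed
  also have "\<dots> = Rset n l a" using Rset_eq[of n a l] a by simp
  finally show ?thesis unfolding regular_def using a by blast
qed

section \<open>Characteristic subgroups without the gap condition\<close>

lemma characteristic_single_coord_transvection:
  assumes H: "characteristic H (Gp n l)" and h: "h \<in> H"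
    and "m \<noteq> k" "m < n" "k < n" and "(2::int) ^ l k dvd c * 2 ^ l m"
  shows "single_coord n k ((c * h m) mod 2 ^ l k) \<in> H"
proof -
  have "h \<in> carrier (Gp n l)" using subgroup.mem_carrier[OF characteristic_subgroup[OF H] h] .
  then show ?thesis
    using characteristic_iso_diff_mem[OF H transvection_iso[OF assms(3-6)] h]
    by (simp add: transvection_diff assms(3,5))
qed

lemma characteristic_single_coord_of_twin:
  assumes H: "characteristic H (Gp n l)" and h: "h \<in> H"
    and "m < n" "t < n" "t \<noteq> m" "l t = l m"
  shows "single_coord n m (h m) \<in> H"
proof -
  have "h \<in> carrier (Gp n l)" using subgroup.mem_carrier[OF characteristic_subgroup[OF H] h] .
  then have hm: "0 \<le> h m" "h m < 2 ^ l m" using carrier_GpD assms(3) by auto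
  let ?g = "single_coord n t (h m)"
  have "single_coord n t ((1 * h m) mod 2 ^ l t) \<in> H"
    by (rule characteristic_single_coord_transvection[OF H h]) (use assms in auto)
  then have g: "?g \<in> H" using hm assms(6) by simp
  have "single_coord n m ((1 * ?g t) mod 2 ^ l m) \<in> H"
    by (rule characteristic_single_coord_transvection[OF H g]) (use assms in auto)
  then show ?thesis using hm assms(4) by (simp add: single_coord_def)
qed

text \<open>Two coordinates whose components escape \<open>H\<close> differ in exponent by at least \<open>2\<close>:
  moving the component of \<open>m\<close> up to \<open>m'\<close> and that of \<open>m'\<close> down to \<open>m\<close> pins the
  exponent of \<open>m'\<close> strictly between that of \<open>m\<close> and that plus \<open>l m' - l m\<close>.\<close>

lemma characteristic_single_coord_gap:
  assumes H: "characteristic H (Gp n l)" and h: "h \<in> H"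
    and m: "m < n" and m': "m' < n" "m \<noteq> m'" and le: "l m \<le> l m'"
    and bad: "single_coord n m (h m) \<notin> H" and bad': "single_coord n m' (h m') \<notin> H"
  shows "l m + 2 \<le> l m'"
proof -
  note sg = characteristic_subgroup[OF H]
  obtain s where s_le: "\<And>k. k < n \<Longrightarrow> s k \<le> l k"
    and s: "\<And>k y. k < n \<Longrightarrow> 0 \<le> y \<Longrightarrow> y < 2 ^ l k \<Longrightarrow> single_coord n k y \<in> H \<longleftrightarrow> 2 ^ s k dvd y"
    using subgroup_single_coord_exponents[OF sg] by metis
  have hc: "h \<in> carrier (Gp n l)" using subgroup.mem_carrier[OF sg h] .
  define d where "d = l m' - l m"
  have d: "l m' = d + l m" using le by (simp add: d_def)
  have not_m: "\<not> 2 ^ s m dvd h m" and not_m': "\<not> 2 ^ s m' dvd h m'"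
    using bad bad' s m m' carrier_GpD[OF hc] by auto
  have "2 ^ d * h m < (2::int) ^ l m'"
    using carrier_GpD[OF hc m] d by (simp add: power_add)
  moreover have "single_coord n m' ((2 ^ d * h m) mod 2 ^ l m') \<in> H"
    by (rule characteristic_single_coord_transvection[OF H h]) (use m m' d in \<open>auto simp: power_add\<close>)
  ultimately have up: "2 ^ s m' dvd (2::int) ^ d * h m"
    using s[OF m'(1)] carrier_GpD[OF hc m] by simp
  have "single_coord n m ((1 * h m') mod 2 ^ l m) \<in> H"
    by (rule characteristic_single_coord_transvection[OF H h]) (use m m' le in \<open>auto intro: le_imp_power_dvd\<close>)
  then have "2 ^ s m dvd h m' mod 2 ^ l m" using s[OF m] by simp
  moreover have "(2::int) ^ s m dvd 2 ^ l m" using s_le[OF m] by (rule le_imp_power_dvd)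
  ultimately have down: "2 ^ s m dvd h m'" by (simp add: dvd_mod_iff)
  have "s m < s m'"
    using down not_m' le_imp_power_dvd[of "s m'" "s m" 2] dvd_trans not_le by metis
  moreover have "s m' < d + s m"
  proof (rule ccontr)
    assume "\<not> s m' < d + s m"
    then have "(2::int) ^ d * 2 ^ s m dvd 2 ^ d * h m"
      using up le_imp_power_dvd[of "d + s m" "s m'" 2] dvd_trans by (metis not_le power_add)
    then show False using not_m by simp
  qed
  ultimately show ?thesis using d by simp
qed

definition unrepeated :: "nat \<Rightarrow> (nat \<Rightarrow> nat) \<Rightarrow> nat \<Rightarrow> bool" where
  "unrepeated n l i \<longleftrightarrow> card {k. k < n \<and> l k = l i} = 1"

lemma unrepeated_iff:
  assumes i: "i < n"
  shows "unrepeated n l i \<longleftrightarrow> (\<forall>k<n. l k = l i \<longrightarrow> k = i)"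
proof
  assume "unrepeated n l i"
  then obtain x where x: "{k. k < n \<and> l k = l i} = {x}"
    unfolding unrepeated_def by (rule card_1_singletonE)
  show "\<forall>k<n. l k = l i \<longrightarrow> k = i"
  proof (intro allI impI)
    fix k assume "k < n" "l k = l i"
    then have "k \<in> {x}" "i \<in> {x}" using i unfolding x[symmetric] by simp_all
    then show "k = i" by simp
  qed
next
  assume "\<forall>k<n. l k = l i \<longrightarrow> k = i"
  then have "{k. k < n \<and> l k = l i} = {i}" using i by blast
  then show "unrepeated n l i" unfolding unrepeated_def by simp
qed

lemma characteristic_coordinate_closed:
  assumes H: "characteristic H (Gp n l)"
    and sorted: "\<And>i j. i \<le> j \<Longrightarrow> j < n \<Longrightarrow> l i \<le> l j"
    and no_gap: "\<not> (\<exists>i j. i < j \<and> j < n \<and> l i + 2 \<le> l j \<and> unrepeated n l i \<and> unrepeated n l j)"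
  shows "coordinate_closed n H"
proof -
  have "single_coord n k (h k) \<in> H" if h: "h \<in> H" and k: "k < n" for h k
  proof (rule ccontr)
    assume bad_k: "single_coord n k (h k) \<notin> H"
    have unrepeated: "unrepeated n l m" if m: "m < n" "single_coord n m (h m) \<notin> H" for m
    proof -
      have "t = m" if "t < n" "l t = l m" for t
        using characteristic_single_coord_of_twin[OF H h m(1) that(1) _ that(2)] m(2) by blast
      then show ?thesis using unrepeated_iff[OF m(1)] by blast
    qed
    obtain m where m: "m < n" "m \<noteq> k" "single_coord n m (h m) \<notin> H"
      using single_coord_mem_if_others[OF characteristic_subgroup[OF H] h k] bad_k by blast
    show False
    proof (cases "m < k")
      case True
      then have "l m + 2 \<le> l k"
        using characteristic_single_coord_gap[OF H h m(1) k m(2) _ m(3) bad_k] sorted k by simp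
      moreover have "unrepeated n l m" "unrepeated n l k" using unrepeated m k bad_k by auto
      ultimately show False using no_gap True k by blast
    next
      case False
      then have "k < m" using m(2) by simp
      then have "l k + 2 \<le> l m"
        using characteristic_single_coord_gap[OF H h k m(1) m(2)[symmetric] _ bad_k m(3)] sorted m(1)
        by simp
      moreover have "unrepeated n l m" "unrepeated n l k" using unrepeated m k bad_k by auto
      ultimately show False using no_gap \<open>k < m\<close> m(1) by blast
    qed
  qed
  then show ?thesis unfolding coordinate_closed_def by blast
qed

section \<open>The coupling subgroup\<close>

definition coupling_set :: "nat \<Rightarrow> (nat \<Rightarrow> nat) \<Rightarrow> nat \<Rightarrow> nat \<Rightarrow> (nat \<Rightarrow> int) set" where
  "coupling_set n l i j = {g \<in> carrier (Gp n l).
     (\<forall>k<n. (2::int) ^ l k dvd 4 * g k) \<and> (\<forall>k<n. (2::int) ^ min (l i - 1) (l k) dvd g k)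
     \<and> (\<forall>k<n. (2::int) ^ min (l j - 1) (l k) dvd 2 * g k)
     \<and> (2::int) ^ (l j - 1) dvd 2 ^ (l j - l i - 1) * g i + g j}"

lemma mem_coupling_set_of_Gp_iff:
  assumes g: "g \<in> carrier (Gp n l)"
  shows "g \<in> coupling_set_of (Gp n l) a b \<longleftrightarrow>
    (\<forall>k<n. (2::int) ^ l k dvd 4 * g k) \<and> (\<forall>k<n. (2::int) ^ min (a - 1) (l k) dvd g k)
    \<and> (\<forall>k<n. (2::int) ^ min (b - 1) (l k) dvd 2 * g k)
    \<and> ((\<forall>k<n. (2::int) ^ min a (l k) dvd g k) \<longleftrightarrow> (\<forall>k<n. (2::int) ^ min b (l k) dvd 2 * g k))"
proof -
  have "g \<in> coupling_set_of (Gp n l) a b \<longleftrightarrow> g [^]\<^bsub>Gp n l\<^esub> (4::nat) = \<one>\<^bsub>Gp n l\<^esub>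
      \<and> g \<in> pow_image (Gp n l) (2 ^ (a - 1))
      \<and> g [^]\<^bsub>Gp n l\<^esub> (2::nat) \<in> pow_image (Gp n l) (2 ^ (b - 1))
      \<and> (g \<in> pow_image (Gp n l) (2 ^ a) \<longleftrightarrow> g [^]\<^bsub>Gp n l\<^esub> (2::nat) \<in> pow_image (Gp n l) (2 ^ b))"
    using g by (simp add: coupling_set_of_def)
  then show ?thesis
    unfolding nat_pow_mem_pow_image_Gp_iff[OF g] nat_pow_eq_one_Gp_iff[OF g]
    unfolding mem_pow_image_Gp using g by simp
qed

lemma coupling_conditions_low_iff:
  assumes i: "i < n" "unrepeated n l i" and gap: "l i + 2 \<le> l j"
    and four: "\<forall>k<n. (2::int) ^ l k dvd 4 * g k"
    and low: "\<forall>k<n. (2::int) ^ min (l i - 1) (l k) dvd g k"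
    and two: "\<forall>k<n. (2::int) ^ min (l j - 1) (l k) dvd 2 * g k"
  shows "(\<forall>k<n. (2::int) ^ min (l i) (l k) dvd g k) \<longleftrightarrow> 2 ^ l i dvd g i"
proof
  assume "\<forall>k<n. (2::int) ^ min (l i) (l k) dvd g k"
  then have "2 ^ min (l i) (l i) dvd g i" using i by blast
  then show "2 ^ l i dvd g i" by simp
next
  assume gi: "2 ^ l i dvd g i"
  have "(2::int) ^ min (l i) (l k) dvd g k" if k: "k < n" for k
  proof (cases "k = i")
    case False
    then have "l k \<noteq> l i" using i unrepeated_iff[OF i(1)] k by blast
    then show ?thesis
      using pow2_min_dvd_from_coupling_conditions[of "l k" "g k" "l i" "l j"] four low two k gap by blast
  qed (use gi in simp)
  then show "\<forall>k<n. (2::int) ^ min (l i) (l k) dvd g k" by blast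
qed

lemma coupling_conditions_high_iff:
  assumes j: "j < n" "unrepeated n l j" and "2 \<le> l j"
    and four: "\<forall>k<n. (2::int) ^ l k dvd 4 * g k"
    and two: "\<forall>k<n. (2::int) ^ min (l j - 1) (l k) dvd 2 * g k"
  shows "(\<forall>k<n. (2::int) ^ min (l j) (l k) dvd 2 * g k) \<longleftrightarrow> 2 ^ (l j - 1) dvd g j"
proof
  assume "\<forall>k<n. (2::int) ^ min (l j) (l k) dvd 2 * g k"
  then have "2 ^ min (l j) (l j) dvd 2 * g j" using j by blast
  then show "2 ^ (l j - 1) dvd g j" using pow2_dvd_times2_iff[of "l j" "g j"] \<open>2 \<le> l j\<close> by simp
next
  assume gj: "2 ^ (l j - 1) dvd g j"
  have "(2::int) ^ min (l j) (l k) dvd 2 * g k" if k: "k < n" for k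
  proof (cases "k = j")
    case False
    then have "l k \<noteq> l j" using j unrepeated_iff[OF j(1)] k by blast
    then show ?thesis
      using pow2_min_dvd_double_from_coupling_conditions[of "l k" "g k" "l j"] four two k \<open>2 \<le> l j\<close>
      by blast
  qed (use gj \<open>2 \<le> l j\<close> pow2_dvd_times2_iff[of "l j" "g j"] in simp)
  then show "\<forall>k<n. (2::int) ^ min (l j) (l k) dvd 2 * g k" by blast
qed

lemma coupling_set_of_Gp:
  assumes i: "i < n" and j: "j < n" and "1 \<le> l i" and gap: "l i + 2 \<le> l j"
    and unrep_i: "unrepeated n l i" and unrep_j: "unrepeated n l j"
  shows "coupling_set_of (Gp n l) (l i) (l j) = coupling_set n l i j"
proof (rule Set.set_eqI)
  fix g
  show "g \<in> coupling_set_of (Gp n l) (l i) (l j) \<longleftrightarrow> g \<in> coupling_set n l i j"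
  proof (cases "g \<in> carrier (Gp n l)")
    case g: True
    show ?thesis
    proof (cases "(\<forall>k<n. (2::int) ^ l k dvd 4 * g k) \<and> (\<forall>k<n. (2::int) ^ min (l i - 1) (l k) dvd g k)
        \<and> (\<forall>k<n. (2::int) ^ min (l j - 1) (l k) dvd 2 * g k)")
      case True
      then have "(2::int) ^ min (l i - 1) (l i) dvd g i" "(2::int) ^ l j dvd 4 * g j" using i j by blast+
      then have "(2::int) ^ (l i - 1) dvd g i" "(2::int) ^ (l j - 2) dvd g j"
        using pow2_dvd_times4_iff[of "l j" "g j"] gap by simp_all
      moreover have "l i - 1 + 1 = l i" "l j - 2 + 1 = l j - 1" "l j - 2 - (l i - 1) = l j - l i - 1"
        "l i - 1 < l j - 2"
        using gap \<open>1 \<le> l i\<close> by auto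
      ultimately show ?thesis
        using True g gap coupling_conditions_low_iff[OF i unrep_i gap] coupling_conditions_high_iff[OF j unrep_j]
          pow2_coupling_iff[of "l i - 1" "l j - 2" "g i" "g j"]
        by (simp add: mem_coupling_set_of_Gp_iff coupling_set_def)
    qed (use g in \<open>auto simp: mem_coupling_set_of_Gp_iff coupling_set_def\<close>)
  qed (simp add: coupling_set_of_def coupling_set_def)
qed

lemma linear_congruence_subgroup:
  assumes i: "i < n" and j: "j < n" and dvd: "M dvd c * 2 ^ l i" "M dvd d * 2 ^ l j"
  shows "subgroup {g \<in> carrier (Gp n l). M dvd c * g i + d * g j} (Gp n l)"
proof (rule group.subgroupI[OF group_Gp])
  have "\<one>\<^bsub>Gp n l\<^esub> \<in> {g \<in> carrier (Gp n l). M dvd c * g i + d * g j}"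
    using i j group.is_monoid[OF group_Gp] by (simp add: one_Gp monoid.one_closed[of "Gp n l", unfolded one_Gp])
  then show "{g \<in> carrier (Gp n l). M dvd c * g i + d * g j} \<noteq> {}" by blast
next
  fix a assume "a \<in> {g \<in> carrier (Gp n l). M dvd c * g i + d * g j}"
  then have a: "a \<in> carrier (Gp n l)" and "M dvd c * a i + d * a j" by auto
  then have "M dvd - (c * a i + d * a j)" by (simp only: dvd_minus_iff)
  moreover have "- (c * a i + d * a j) = c * (- a i) + d * (- a j)" by simp
  ultimately have "M dvd c * ((- a i) mod 2 ^ l i) + d * ((- a j) mod 2 ^ l j)"
    by (simp only: dvd_linear_mod_iff[OF dvd])
  then show "inv\<^bsub>Gp n l\<^esub> a \<in> {g \<in> carrier (Gp n l). M dvd c * g i + d * g j}"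
    using i j a group.inv_closed[OF group_Gp a] by (simp add: inv_Gp)
next
  fix a b assume "a \<in> {g \<in> carrier (Gp n l). M dvd c * g i + d * g j}"
    and "b \<in> {g \<in> carrier (Gp n l). M dvd c * g i + d * g j}"
  then have a: "a \<in> carrier (Gp n l)" and b: "b \<in> carrier (Gp n l)"
    and "M dvd (c * a i + d * a j) + (c * b i + d * b j)" by auto
  then have "M dvd c * ((a i + b i) mod 2 ^ l i) + d * ((a j + b j) mod 2 ^ l j)"
    by (simp add: dvd_linear_mod_iff[OF dvd] algebra_simps)
  then show "a \<otimes>\<^bsub>Gp n l\<^esub> b \<in> {g \<in> carrier (Gp n l). M dvd c * g i + d * g j}"
    using i j group.is_monoid[OF group_Gp] monoid.m_closed[OF _ a b] by (simp add: mult_Gp)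
qed auto

lemma coupling_set_subgroup:
  assumes i: "i < n" and j: "j < n" and gap: "l i + 2 \<le> l j"
  shows "subgroup (coupling_set n l i j) (Gp n l)"
proof -
  define L where "L M c i d j = {g \<in> carrier (Gp n l). M dvd c * g i + d * g j}"
    for M c d :: int and i j :: nat
  define F where "F = insert (L (2 ^ (l j - 1)) (2 ^ (l j - l i - 1)) i 1 j)
    (\<Union>k\<in>{..<n}. {L (2 ^ l k) 4 k 0 k, L (2 ^ min (l i - 1) (l k)) 1 k 0 k, L (2 ^ min (l j - 1) (l k)) 2 k 0 k})"
  have eq: "coupling_set n l i j = \<Inter>F"
    unfolding coupling_set_def F_def L_def by auto
  have sub: "subgroup H (Gp n l)" if "H \<in> F" for H
  proof -
    have L: "subgroup (L M c i' d j') (Gp n l)"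
      if "i' < n" "j' < n" "M dvd c * 2 ^ l i'" "M dvd d * 2 ^ l j'" for M c d i' j'
      unfolding L_def using that by (rule linear_congruence_subgroup)
    have "(2::int) ^ (l j - 1) dvd 2 ^ (l j - l i - 1) * 2 ^ l i"
      using gap by (simp flip: power_add)
    moreover have "(2::int) ^ min a (l k) dvd c * 2 ^ l k" for a k and c :: int
      by (simp add: le_imp_power_dvd)
    moreover have "(2::int) ^ (l j - 1) dvd 1 * 2 ^ l j" by (simp add: le_imp_power_dvd)
    ultimately show ?thesis
      using that i j unfolding F_def by (auto intro!: L)
  qed
  have "F \<noteq> {}" by (simp add: F_def)
  then show ?thesis unfolding eq using sub by (rule subgroup_Inter[rotated])
qed

text \<open>The witness has components \<open>2^(l i - 1)\<close> at \<open>i\<close> and \<open>2^(l j - 2)\<close> at \<open>j\<close>; its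
  \<open>i\<close>-component alone violates the coupling condition.\<close>

lemma coupling_set_not_coordinate_closed:
  assumes i: "i < n" and j: "j < n" and "i \<noteq> j" and "1 \<le> l i" and gap: "l i + 2 \<le> l j"
  shows "\<not> coordinate_closed n (coupling_set n l i j)"
proof
  assume closed: "coordinate_closed n (coupling_set n l i j)"
  obtain p q where p: "l i = p + 1" and q: "l j = q + 2"
    using \<open>1 \<le> l i\<close> gap by (metis add.commute le_Suc_ex le_add2 le_trans)
  have "p < q" using gap p q by simp
  define g where "g = (\<lambda>k\<in>{..<n}. if k = i then (2::int) ^ p else if k = j then 2 ^ q else 0)"
  have gi: "g i = 2 ^ p" and gj: "g j = 2 ^ q" using i j \<open>i \<noteq> j\<close> by (simp_all add: g_def)
  have "g \<in> carrier (Gp n l)"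
    unfolding g_def by (rule carrier_GpI) (simp add: p q)
  moreover have "(2::int) ^ l k dvd 4 * g k \<and> (2::int) ^ min (l i - 1) (l k) dvd g k
      \<and> (2::int) ^ min (l j - 1) (l k) dvd 2 * g k" if "k < n" for k
  proof -
    consider "k = i" | "k = j" | "k \<noteq> i" "k \<noteq> j" by blast
    then show ?thesis
    proof cases
      case 1
      then show ?thesis using gi p \<open>p < q\<close> q
        by (simp add: le_imp_power_dvd mult_dvd_mono flip: power_Suc)
    next
      case 2
      then show ?thesis using gj p \<open>p < q\<close> q
        by (simp add: le_imp_power_dvd mult_dvd_mono flip: power_Suc)
    qed (use that in \<open>simp add: g_def\<close>)
  qed
  moreover have "(2::int) ^ (l j - 1) dvd 2 ^ (l j - l i - 1) * g i + g j"
    using gi gj p q \<open>p < q\<close> by (simp flip: power_add)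
  ultimately have "g \<in> coupling_set n l i j" by (simp add: coupling_set_def)
  then have "single_coord n i (g i) \<in> coupling_set n l i j"
    using closed i unfolding coordinate_closed_def by blast
  then have "(2::int) ^ (q + 1) dvd 2 ^ (q - p) * 2 ^ p"
    using i j \<open>i \<noteq> j\<close> p q gi by (simp add: coupling_set_def single_coord_def)
  then have "(2::int) ^ (q + 1) dvd 2 ^ q" using \<open>p < q\<close> by (simp flip: power_add)
  then show False using zdvd_imp_le[of "2 ^ (q + 1)" "(2::int) ^ q"] by simp
qed

lemma coupling_set_characteristic_irregular:
  assumes "i < j" "j < n" "1 \<le> l i" "l i + 2 \<le> l j" "unrepeated n l i" "unrepeated n l j"
  shows "characteristic (coupling_set n l i j) (Gp n l) \<and> \<not> regular n l (coupling_set n l i j)"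
proof
  have i: "i < n" using assms(1,2) by simp
  note eq = coupling_set_of_Gp[OF i assms(2-6)]
  have "subgroup (coupling_set n l i j) (Gp n l)"
    using coupling_set_subgroup[OF i assms(2,4)] .
  then show "characteristic (coupling_set n l i j) (Gp n l)"
    unfolding eq[symmetric] by (rule characteristic_coupling_set_of[OF group_Gp])
  show "\<not> regular n l (coupling_set n l i j)"
    using coupling_set_not_coordinate_closed[OF i assms(2) _ assms(3,4)] assms(1)
      regular_imp_coordinate_closed by blast
qed

theorem mainTheorem12:
  fixes n :: nat and l :: "nat \<Rightarrow> nat"
  assumes pos: "\<And>i. i < n \<Longrightarrow> 1 \<le> l i"
    and sorted: "\<And>i j. i \<le> j \<Longrightarrow> j < n \<Longrightarrow> l i \<le> l j"
  shows "(\<exists>H. characteristic H (Gp n l) \<and> \<not> regular n l H) \<longleftrightarrow>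
         (\<exists>i j. i < j \<and> j < n \<and> l i + 2 \<le> l j
            \<and> card {k. k < n \<and> l k = l i} = 1 \<and> card {k. k < n \<and> l k = l j} = 1)"
  unfolding unrepeated_def[symmetric]
proof
  assume "\<exists>H. characteristic H (Gp n l) \<and> \<not> regular n l H"
  then obtain H where H: "characteristic H (Gp n l)" and irregular: "\<not> regular n l H" by blast
  show "\<exists>i j. i < j \<and> j < n \<and> l i + 2 \<le> l j \<and> unrepeated n l i \<and> unrepeated n l j"
  proof (rule ccontr)
    assume "\<not> ?thesis"
    then have "coordinate_closed n H" using characteristic_coordinate_closed[OF H sorted] by blast
    then show False
      using coordinate_closed_imp_regular[OF characteristic_subgroup[OF H]] irregular by blast
  qed
next
  assume "\<exists>i j. i < j \<and> j < n \<and> l i + 2 \<le> l j \<and> unrepeated n l i \<and> unrepeated n l j"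
  then obtain i j where "i < j" "j < n" "l i + 2 \<le> l j" "unrepeated n l i" "unrepeated n l j" by blast
  moreover have "1 \<le> l i" using pos \<open>i < j\<close> \<open>j < n\<close> by simp
  ultimately show "\<exists>H. characteristic H (Gp n l) \<and> \<not> regular n l H"
    using coupling_set_characteristic_irregular by blast
qed

end
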